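(* Let $0\le\lambda<\gamma\le\delta$ and let $\mathfrak{f}=\mathfrak{s}+\overline{\mathfrak{t}}\in\mathcal{R}_H^0(\gamma,\delta,\lambda)$ with $\mathfrak{s}(z)=z+\sum_{m\ge2}a_mz^m$, $\mathfrak{t}(z)=\sum_{m\ge2}b_mz^m$. Then for every $m\ge2$: (i) $|a_m|+|b_m|\le\frac{4(\gamma-\lambda)}{m^2[2\gamma+(\delta-\gamma)(m-1)]}$; (ii) $\big||a_m|-|b_m|\big|\le\frac{4(\gamma-\lambda)}{m^2[2\gamma+(\delta-\gamma)(m-1)]}$; (iii) $|a_m|\le\frac{4(\gamma-\lambda)}{m^2[2\gamma+(\delta-\gamma)(m-1)]}$. All these results are sharp, with equality in each for the function $\mathfrak{f}(z)=z+\sum_{m\ge2}\frac{4(\gamma-\lambda)}{m^2[2\gamma+(\delta-\gamma)(m-1)]}z^m$.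
   Context: Let $\mathcal{U}=\{z\in\mathbb{C}:|z|<1\}$. $\mathcal{H}^0$ denotes the class of complex-valued harmonic functions $\mathfrak{f}=\mathfrak{s}+\overline{\mathfrak{t}}$ on $\mathcal{U}$, where $\mathfrak{s}(z)=z+\sum_{m\ge2}a_mz^m$ and $\mathfrak{t}(z)=\sum_{m\ge2}b_mz^m$ are analytic in $\mathcal{U}$. For real $0\le\lambda<\gamma\le\delta$, $\mathcal{R}_H^0(\gamma,\delta,\lambda)$ is the class of $\mathfrak{f}=\mathfrak{s}+\overline{\mathfrak{t}}\in\mathcal{H}^0$ such that for all $z\in\mathcal{U}$, $\mathrm{Re}\left[\gamma\mathfrak{s}'(z)+\delta z\mathfrak{s}''(z)+\frac{\delta-\gamma}{2}z^2\mathfrak{s}'''(z)-\lambda\right]>\left|\gamma\mathfrak{t}'(z)+\delta z\mathfrak{t}''(z)+\frac{\delta-\gamma}{2}z^2\mathfrak{t}'''(z)\right|$. *)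

theory Defs
  imports "HOL-Complex_Analysis.Complex_Analysis"
begin

definition tcoeff :: "(complex \<Rightarrow> complex) \<Rightarrow> nat \<Rightarrow> complex" where
  "tcoeff f m = (deriv ^^ m) f 0 / of_nat (fact m)"

definition Lop :: "real \<Rightarrow> real \<Rightarrow> (complex \<Rightarrow> complex) \<Rightarrow> complex \<Rightarrow> complex" where
  "Lop \<gamma> \<delta> f z = of_real \<gamma> * deriv f z + of_real \<delta> * z * (deriv ^^ 2) f z
      + of_real ((\<delta> - \<gamma>) / 2) * z^2 * (deriv ^^ 3) f z"

definition H0 :: "(complex \<Rightarrow> complex) \<Rightarrow> (complex \<Rightarrow> complex) \<Rightarrow> bool" where
  "H0 s t \<longleftrightarrow> s holomorphic_on ball 0 1 \<and> t holomorphic_on ball 0 1 \<and>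
      s 0 = 0 \<and> deriv s 0 = 1 \<and> t 0 = 0 \<and> deriv t 0 = 0"

text \<open>Class R_H^0(gamma, delta, lambda), with f = s + conj t represented by the pair (s,t).\<close>
definition RH0 :: "real \<Rightarrow> real \<Rightarrow> real \<Rightarrow> (complex \<Rightarrow> complex) \<Rightarrow> (complex \<Rightarrow> complex) \<Rightarrow> bool" where
  "RH0 \<gamma> \<delta> lam s t \<longleftrightarrow> H0 s t \<and>
     (\<forall>z\<in>ball 0 1. Re (Lop \<gamma> \<delta> s z - of_real lam) > norm (Lop \<gamma> \<delta> t z))"

end

theory Submission
  imports Defs
begin

(* The k-th Taylor coefficient of Lop s is Lop_weight (k + 1) * a_(k+1), and
   4 (gamma - lam) / (m^2 (2 gamma + (delta - gamma)(m - 1))) = 2 (gamma - lam) / Lop_weight m.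
   For |eps| <= 1 the function g = Lop s - lam + eps * Lop t has nonnegative real part on the
   disc and g 0 = gamma - lam, so Caratheodory's bound |c_k| <= 2 Re (g 0) gives
   Lop_weight m * |a_m + eps b_m| <= 2 (gamma - lam); the rotation eps aligning eps b_m with a_m
   turns this into |a_m| + |b_m| <= B m.  Equality holds for the s with
   Lop s = lam + (gamma - lam)(1 + z)/(1 - z), the Cayley map onto the half-plane Re > lam,
   whose Taylor coefficients are gamma, 2 (gamma - lam), 2 (gamma - lam), ... *)

lemma tcoeff_sums:
  assumes "g holomorphic_on ball 0 r" "z \<in> ball 0 r"
  shows "(\<lambda>n. tcoeff g n * z ^ n) sums g z"
  using holomorphic_power_series[OF assms] by (simp add: tcoeff_def)

lemma
  assumes r: "0 < r" and sums: "\<And>z. z \<in> ball 0 r \<Longrightarrow> (\<lambda>n. c n * z ^ n) sums f z"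
  shows holomorphic_on_power_series: "f holomorphic_on ball 0 r"
    and tcoeff_power_series: "tcoeff f n = c n"
proof -
  show "f holomorphic_on ball 0 r"
    using sums by (intro power_series_holomorphic[of 0]) simp
  define F where "F = Abs_fps c"
  have "fps_conv_radius F \<ge> r"
    unfolding fps_conv_radius_def F_def fps_nth_Abs_fps
  proof (rule conv_radius_geI_ex)
    fix \<rho> :: real assume "0 < \<rho>" "ereal \<rho> < r"
    then show "\<exists>z. norm z = \<rho> \<and> summable (\<lambda>n. c n * z ^ n)"
      by (intro exI[of _ "of_real \<rho>"]) (auto intro: sums_summable[OF sums])
  qed
  then have "0 < fps_conv_radius F"
    using r by (metis ereal_less(2) order.strict_trans2)
  moreover have "\<forall>\<^sub>F z in nhds 0. z \<in> ball 0 r"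
    using r by (intro eventually_nhds_in_open) auto
  then have "\<forall>\<^sub>F z in nhds 0. eval_fps F z = f z"
    by eventually_elim (auto simp: eval_fps_def F_def sums_unique[OF sums])
  ultimately have "f has_fps_expansion F"
    using eval_fps_has_fps_expansion has_fps_expansion_cong by blast
  from fps_nth_fps_expansion[OF this, of n] show "tcoeff f n = c n"
    by (simp add: tcoeff_def F_def)
qed

lemma tcoeff_linear_comb:
  fixes f g :: "complex \<Rightarrow> complex"
  assumes "f holomorphic_on S" "g holomorphic_on S" "open S" "0 \<in> S" "k \<ge> 1"
  shows "tcoeff (\<lambda>z. f z + b * g z - c) k = tcoeff f k + b * tcoeff g k"
proof -
  have bg: "(\<lambda>z. b * g z) holomorphic_on S"
    by (intro holomorphic_intros assms)
  have "(deriv ^^ k) (\<lambda>z. f z + b * g z - c) 0 =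
      (deriv ^^ k) f 0 + (deriv ^^ k) (\<lambda>z. b * g z) 0 - (deriv ^^ k) (\<lambda>z. c) 0"
    using assms by (simp add: higher_deriv_diff[OF holomorphic_on_add[OF assms(1) bg] holomorphic_on_const]
        higher_deriv_add[OF assms(1) bg])
  also have "\<dots> = (deriv ^^ k) f 0 + b * (deriv ^^ k) g 0"
    using assms by (simp add: higher_deriv_cmult higher_deriv_const)
  finally show ?thesis by (simp add: tcoeff_def add_divide_distrib)
qed

lemma higher_deriv_power_mult_at_0:
  fixes h :: "complex \<Rightarrow> complex"
  assumes "h holomorphic_on S" "open S" "0 \<in> S"
  shows "(deriv ^^ k) (\<lambda>w. w ^ j * h w) 0 = of_nat (k choose j) * fact j * (deriv ^^ (k - j)) h 0"
proof -
  have power: "(deriv ^^ i) (\<lambda>w. w ^ j) (0::complex) = (if i = j then fact j else 0)" for i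
  proof -
    have "(deriv ^^ i) (\<lambda>w. (w - 0) ^ j) (0::complex) = pochhammer (of_nat (Suc j - i)) i * (0 - 0) ^ (j - i)"
      by (rule higher_deriv_power)
    then show ?thesis
      by (auto simp: pochhammer_fact pochhammer_0_left not_le)
  qed
  have "(deriv ^^ k) (\<lambda>w. w ^ j * h w) 0 =
      (\<Sum>i = 0..k. of_nat (k choose i) * (deriv ^^ i) (\<lambda>w. w ^ j) 0 * (deriv ^^ (k - i)) h 0)"
    by (rule higher_deriv_mult) (auto intro!: holomorphic_intros assms)
  also have "\<dots> = of_nat (k choose j) * fact j * (deriv ^^ (k - j)) h 0"
    by (simp add: power if_distrib if_distribR sum.delta' cong: if_cong)
  finally show ?thesis .
qed

lemma has_contour_integral_circlepath_0_iff:
  fixes r :: real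
  shows "(f has_contour_integral I) (circlepath 0 r) \<longleftrightarrow>
     ((\<lambda>x. 2 * pi * \<i> * r * cis (2 * pi * x) * f (r * cis (2 * pi * x))) has_integral I) {0..1}"
  unfolding has_contour_integral_def
proof (intro has_integral_cong)
  fix x :: real assume "x \<in> {0..1}"
  then show "f (circlepath 0 r x) * vector_derivative (circlepath 0 r) (at x within {0..1}) =
      2 * pi * \<i> * r * cis (2 * pi * x) * f (r * cis (2 * pi * x))"
    by (subst vector_derivative_circlepath01) (auto simp: circlepath cis_conv_exp mult_ac)
qed

lemma circle_integral_tcoeff:
  fixes g :: "complex \<Rightarrow> complex" and r :: real
  assumes hol: "g holomorphic_on ball 0 1" and r: "0 < r" "r < 1"
  shows "((\<lambda>x. g (r * cis (2 * pi * x)) / cis (2 * pi * x) ^ k) has_integral r ^ k * tcoeff g k) {0..1}"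
proof -
  have "((\<lambda>u. g u / (u - 0) ^ Suc k) has_contour_integral (2 * pi * \<i>) / fact k * (deriv ^^ k) g 0)
          (circlepath 0 r)"
    using r by (intro Cauchy_has_contour_integral_higher_derivative_circlepath
        holomorphic_on_imp_continuous_on holomorphic_on_subset[OF hol]) auto
  then have "((\<lambda>x. (2 * pi * \<i> / r ^ k) * (g (r * cis (2 * pi * x)) / cis (2 * pi * x) ^ k))
      has_integral (2 * pi * \<i>) / fact k * (deriv ^^ k) g 0) {0..1}"
    unfolding has_contour_integral_circlepath_0_iff
    by (rule has_integral_cong[THEN iffD1, rotated])
       (use r in \<open>simp add: power_mult_distrib field_simps\<close>)
  then have "((\<lambda>x. g (r * cis (2 * pi * x)) / cis (2 * pi * x) ^ k)
      has_integral (2 * pi * \<i>) / fact k * (deriv ^^ k) g 0 / (2 * pi * \<i> / r ^ k)) {0..1}"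
    using r by (subst (asm) has_integral_mult_right_iff) auto
  moreover have "(2 * pi * \<i>) / fact k * (deriv ^^ k) g 0 / (2 * pi * \<i> / r ^ k) = r ^ k * tcoeff g k"
    by (simp add: tcoeff_def)
  ultimately show ?thesis by simp
qed

lemma circle_integral_positive_frequency:
  fixes g :: "complex \<Rightarrow> complex" and r :: real
  assumes hol: "g holomorphic_on ball 0 1" and r: "0 < r" "r < 1" and n: "n \<ge> 1"
  shows "((\<lambda>x. g (r * cis (2 * pi * x)) * cis (2 * pi * x) ^ n) has_integral 0) {0..1}"
proof -
  have "((\<lambda>u. g u * u ^ (n - 1)) has_contour_integral 0) (circlepath 0 r)"
    using r by (intro Cauchy_theorem_disc_simple[of _ 0 1] holomorphic_intros hol) auto
  then have "((\<lambda>x. (2 * pi * \<i> * r ^ n) * (g (r * cis (2 * pi * x)) * cis (2 * pi * x) ^ n))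
      has_integral 0) {0..1}"
    unfolding has_contour_integral_circlepath_0_iff
    by (rule has_integral_cong[THEN iffD1, rotated])
       (use n in \<open>simp add: power_mult_distrib mult_ac power_Suc[symmetric]\<close>)
  then show ?thesis
    using r by (simp add: has_integral_mult_right_iff)
qed

lemma caratheodory_coeff_bound_circle:
  fixes g :: "complex \<Rightarrow> complex" and r :: real
  assumes hol: "g holomorphic_on ball 0 1" and pos: "\<And>z. z \<in> ball 0 1 \<Longrightarrow> 0 \<le> Re (g z)"
    and r: "0 < r" "r < 1" and n: "n \<ge> 1"
  shows "r ^ n * norm (tcoeff g n) \<le> 2 * Re (g 0)"
proof -
  define e where "e x = cis (2 * pi * x)" for x :: real
  \<comment> \<open>adding this vanishing integral replaces \<open>g\<close> by \<open>2 Re g \<ge> 0\<close>, whose mean is \<open>2 Re (g 0)\<close>\<close>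
  have "((\<lambda>x. cnj (g (r * e x) * e x ^ n)) has_integral 0) {0..1}"
    using has_integral_cnj[THEN iffD2, OF circle_integral_positive_frequency[OF hol r n, folded e_def]]
    unfolding o_def complex_cnj_zero .
  from has_integral_add[OF circle_integral_tcoeff[OF hol r, of n, folded e_def] this]
  have "((\<lambda>x. g (r * e x) / e x ^ n + cnj (g (r * e x) * e x ^ n)) has_integral r ^ n * tcoeff g n)
      {0..1}"
    by simp
  then have "((\<lambda>x. 2 * Re (g (r * e x)) / e x ^ n) has_integral r ^ n * tcoeff g n) {0..1}"
  proof (rule has_integral_cong[THEN iffD1, rotated])
    fix x :: real
    have "cnj (e x) = inverse (e x)" by (simp add: e_def cis_cnj cis_inverse)
    then have "g (r * e x) / e x ^ n + cnj (g (r * e x) * e x ^ n) = (g (r * e x) + cnj (g (r * e x))) / e x ^ n"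
      by (simp add: divide_inverse power_inverse distrib_right)
    then show "g (r * e x) / e x ^ n + cnj (g (r * e x) * e x ^ n) = 2 * Re (g (r * e x)) / e x ^ n"
      by (simp add: complex_add_cnj)
  qed
  moreover have "((\<lambda>x. 2 * g (r * e x)) has_integral 2 * g 0) {0..1}"
    using has_integral_mult_right[OF circle_integral_tcoeff[OF hol r, of 0, folded e_def], of 2]
    by (simp add: tcoeff_def)
  ultimately have "norm (r ^ n * tcoeff g n) \<le> (2 * g 0) \<bullet> 1"
  proof (rule has_integral_norm_bound_integral_component)
    fix x :: real
    have "r * e x \<in> ball 0 1" using r by (simp add: e_def norm_mult)
    then show "norm (2 * Re (g (r * e x)) / e x ^ n) \<le> (2 * g (r * e x)) \<bullet> 1"
      using pos by (simp add: e_def norm_divide norm_power)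
  qed
  then show ?thesis using r by (simp add: norm_mult norm_power)
qed

theorem caratheodory_coeff_bound:
  fixes g :: "complex \<Rightarrow> complex"
  assumes hol: "g holomorphic_on ball 0 1" and pos: "\<And>z. z \<in> ball 0 1 \<Longrightarrow> 0 \<le> Re (g z)"
    and n: "n \<ge> 1"
  shows "norm (tcoeff g n) \<le> 2 * Re (g 0)"
proof (rule tendsto_upperbound)
  show "((\<lambda>r. r ^ n * norm (tcoeff g n)) \<longlongrightarrow> norm (tcoeff g n)) (at_left 1)"
    by (auto intro!: tendsto_eq_intros)
  show "\<forall>\<^sub>F r in at_left 1. r ^ n * norm (tcoeff g n) \<le> 2 * Re (g 0)"
  proof -
    have "\<forall>\<^sub>F r in at_left 1. r \<in> {0<..<1::real}"
      by (rule eventually_at_left_real) simp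
    then show ?thesis by eventually_elim (auto intro: caratheodory_coeff_bound_circle[OF hol pos _ _ n])
  qed
qed simp

lemma norm_add_norm_le_if_rotations_le:
  fixes a b :: complex
  assumes le: "\<And>\<epsilon>. norm \<epsilon> \<le> 1 \<Longrightarrow> norm (a + \<epsilon> * b) \<le> C"
  shows "norm a + norm b \<le> C"
proof (cases "a = 0")
  case True
  then show ?thesis using le[of 1] by simp
next
  case False
  have "a + (sgn a * cnj (sgn b)) * b = sgn a * of_real (norm a + norm b)"
    using False by (cases "b = 0")
       (simp_all add: sgn_div_norm scaleR_conv_of_real field_simps complex_norm_square[symmetric]
         power2_eq_square)
  then have "norm (a + (sgn a * cnj (sgn b)) * b) = norm a + norm b"
    using False by (simp add: norm_mult norm_sgn del: of_real_add)
  then show ?thesis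
    using le[of "sgn a * cnj (sgn b)"] by (simp add: norm_mult norm_sgn)
qed

definition Lop_weight :: "real \<Rightarrow> real \<Rightarrow> nat \<Rightarrow> real" where
  "Lop_weight \<gamma> \<delta> m = real m ^ 2 * (2 * \<gamma> + (\<delta> - \<gamma>) * (real m - 1)) / 2"

lemma holomorphic_on_Lop:
  assumes "s holomorphic_on S" "open S"
  shows "Lop \<gamma> \<delta> s holomorphic_on S"
  unfolding Lop_def by (intro holomorphic_intros holomorphic_higher_deriv holomorphic_deriv assms)

lemma tcoeff_Lop:
  assumes hol: "s holomorphic_on S" and S: "open S" "0 \<in> S"
  shows "tcoeff (Lop \<gamma> \<delta> s) k = of_real (Lop_weight \<gamma> \<delta> (Suc k)) * tcoeff s (Suc k)"
proof -
  define T where "T j z = z ^ j * (deriv ^^ Suc j) s z" for j z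
  have T_hol: "T j holomorphic_on S" for j
    unfolding T_def by (intro holomorphic_intros holomorphic_higher_deriv hol S)
  have T_deriv: "(deriv ^^ k) (T j) 0 = of_nat (k choose j) * fact j * (deriv ^^ Suc k) s 0" for j
  proof -
    have "(deriv ^^ k) (T j) 0 = of_nat (k choose j) * fact j * (deriv ^^ (k - j)) ((deriv ^^ Suc j) s) 0"
      unfolding T_def by (rule higher_deriv_power_mult_at_0[OF holomorphic_higher_deriv[OF hol S(1)] S])
    moreover have "(deriv ^^ (k - j)) ((deriv ^^ Suc j) s) = (deriv ^^ (k - j + Suc j)) s"
      by (simp only: funpow_add o_def)
    ultimately show ?thesis
      by (cases "j \<le> k") simp_all
  qed
  define c where "c = \<gamma> + \<delta> * k + (\<delta> - \<gamma>) / 2 * (real (k choose 2) * 2)"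
  have "(deriv ^^ k) (Lop \<gamma> \<delta> s) 0 =
      of_real \<gamma> * (deriv ^^ k) (T 0) 0 + (of_real \<delta> * (deriv ^^ k) (T 1) 0
      + of_real ((\<delta> - \<gamma>) / 2) * (deriv ^^ k) (T 2) 0)"
  proof -
    have "Lop \<gamma> \<delta> s = (\<lambda>z. of_real \<gamma> * T 0 z + (of_real \<delta> * T 1 z + of_real ((\<delta> - \<gamma>) / 2) * T 2 z))"
      by (simp add: Lop_def T_def fun_eq_iff eval_nat_numeral mult_ac)
    moreover have hc: "(\<lambda>z. c * T j z) holomorphic_on S" for c j
      by (intro holomorphic_intros T_hol)
    ultimately show ?thesis
      by (simp only: higher_deriv_add[OF hc holomorphic_on_add[OF hc hc] S] higher_deriv_add[OF hc hc S]
          higher_deriv_cmult[OF T_hol S(2) S(1)])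
  qed
  also have "\<dots> = of_real c * (deriv ^^ Suc k) s 0"
    by (simp add: T_deriv c_def algebra_simps)
  finally have L: "(deriv ^^ k) (Lop \<gamma> \<delta> s) 0 = of_real c * (deriv ^^ Suc k) s 0" .
  have choose_2: "real (k choose 2) * 2 = real k * (real k - 1)"
    by (induction k) (simp_all add: numeral_2_eq_2 algebra_simps)
  have W: "Lop_weight \<gamma> \<delta> (Suc k) = c * Suc k"
    unfolding c_def choose_2 by (simp add: Lop_weight_def field_simps power2_eq_square)
  have cancel: "a * D / F = (a * N) * (D / (N * F))" if "N \<noteq> 0" "F \<noteq> 0" for a D N F :: complex
    using that by simp
  show ?thesis
    unfolding tcoeff_def W L of_real_mult of_real_of_nat_eq fact_Suc of_nat_id of_nat_mult
    by (rule cancel) (simp_all del: of_nat_Suc)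
qed

lemma Lop_weight_ge:
  assumes "0 < \<gamma>" "\<gamma> \<le> \<delta>" "m \<ge> 1"
  shows "\<gamma> \<le> Lop_weight \<gamma> \<delta> m"
proof -
  have "1 * (2 * \<gamma>) \<le> real m ^ 2 * (2 * \<gamma> + (\<delta> - \<gamma>) * (real m - 1))"
    using assms by (intro mult_mono) auto
  then show ?thesis by (simp add: Lop_weight_def)
qed

lemma RH0_coeff_bound:
  assumes R: "RH0 \<gamma> \<delta> lam s t" and m: "m \<ge> 2" and w: "0 < Lop_weight \<gamma> \<delta> m"
  shows "norm (tcoeff s m) + norm (tcoeff t m) \<le> 2 * (\<gamma> - lam) / Lop_weight \<gamma> \<delta> m"
proof (rule norm_add_norm_le_if_rotations_le)
  fix \<epsilon> :: complex assume \<epsilon>: "norm \<epsilon> \<le> 1"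
  from R have hs: "s holomorphic_on ball 0 1" and ht: "t holomorphic_on ball 0 1"
    and s': "deriv s 0 = 1" and t': "deriv t 0 = 0"
    and pos: "\<And>z. z \<in> ball 0 1 \<Longrightarrow> norm (Lop \<gamma> \<delta> t z) < Re (Lop \<gamma> \<delta> s z - of_real lam)"
    unfolding RH0_def H0_def by auto
  obtain k where k: "m = Suc k" "k \<ge> 1" using m by (cases m) auto
  define g where "g z = Lop \<gamma> \<delta> s z + \<epsilon> * Lop \<gamma> \<delta> t z - of_real lam" for z
  have hol: "g holomorphic_on ball 0 1"
    unfolding g_def by (intro holomorphic_intros holomorphic_on_Lop hs ht) auto
  have "0 \<le> Re (g z)" if "z \<in> ball 0 1" for z
  proof -
    have "Re (\<epsilon> * Lop \<gamma> \<delta> t z) \<ge> - norm (Lop \<gamma> \<delta> t z)"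
      using abs_Re_le_cmod[of "\<epsilon> * Lop \<gamma> \<delta> t z"] \<epsilon>
        mult_left_le_one_le[of "norm (Lop \<gamma> \<delta> t z)" "norm \<epsilon>"]
      by (simp add: norm_mult)
    with pos[OF that] show ?thesis by (simp add: g_def)
  qed
  moreover have "g 0 = of_real (\<gamma> - lam)"
    using s' t' by (simp add: g_def Lop_def)
  ultimately have "norm (tcoeff g k) \<le> 2 * (\<gamma> - lam)"
    using caratheodory_coeff_bound[OF hol _ k(2)] by simp
  moreover have "tcoeff g k = tcoeff (Lop \<gamma> \<delta> s) k + \<epsilon> * tcoeff (Lop \<gamma> \<delta> t) k"
    unfolding g_def by (rule tcoeff_linear_comb[OF holomorphic_on_Lop[OF hs] holomorphic_on_Lop[OF ht]]) (use k in auto)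
  then have "tcoeff g k = of_real (Lop_weight \<gamma> \<delta> m) * (tcoeff s m + \<epsilon> * tcoeff t m)"
    by (simp add: tcoeff_Lop[OF hs] tcoeff_Lop[OF ht] k(1) algebra_simps)
  ultimately have "Lop_weight \<gamma> \<delta> m * norm (tcoeff s m + \<epsilon> * tcoeff t m) \<le> 2 * (\<gamma> - lam)"
    using w by (simp only: norm_mult norm_of_real abs_of_pos)
  then show "norm (tcoeff s m + \<epsilon> * tcoeff t m) \<le> 2 * (\<gamma> - lam) / Lop_weight \<gamma> \<delta> m"
    using w by (simp add: field_simps)
qed

lemma Re_cayley_pos:
  fixes z :: complex
  assumes "norm z < 1"
  shows "0 < Re ((1 + z) / (1 - z))"
proof -
  have "(Re z)\<^sup>2 + (Im z)\<^sup>2 < 1"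
    using assms by (simp add: cmod_def power_less_one_iff)
  moreover have "z \<noteq> 1" using assms by auto
  then have "0 < (1 - Re z)\<^sup>2 + (Im z)\<^sup>2"
    by (simp add: add_pos_nonneg complex_eq_iff sum_power2_gt_zero_iff)
  ultimately show ?thesis
    by (simp add: Re_divide power2_eq_square algebra_simps)
qed

definition extremal_fun :: "real \<Rightarrow> real \<Rightarrow> real \<Rightarrow> complex \<Rightarrow> complex" where
  "extremal_fun \<gamma> \<delta> lam z = z + (\<Sum>k. of_real (2 * (\<gamma> - lam) / Lop_weight \<gamma> \<delta> (k + 2)) * z ^ (k + 2))"

lemma
  assumes \<gamma>: "0 < \<gamma>" and \<delta>: "\<gamma> \<le> \<delta>"
  shows holomorphic_on_extremal_fun: "extremal_fun \<gamma> \<delta> lam holomorphic_on ball 0 1"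
    and tcoeff_extremal_fun: "tcoeff (extremal_fun \<gamma> \<delta> lam) n =
      (if n = 0 then 0 else if n = 1 then 1 else of_real (2 * (\<gamma> - lam) / Lop_weight \<gamma> \<delta> n))"
proof -
  define a where "a n = (if n = 0 then 0 else if n = 1 then 1
      else of_real (2 * (\<gamma> - lam) / Lop_weight \<gamma> \<delta> n) :: complex)" for n
  have a_bound: "norm (a n) \<le> 1 + \<bar>2 * (\<gamma> - lam)\<bar> / \<gamma>" for n
  proof (cases "n \<ge> 2")
    case True
    have w: "\<gamma> \<le> Lop_weight \<gamma> \<delta> n"
      using Lop_weight_ge[OF \<gamma> \<delta>, of n] True by simp
    from True have "a n = of_real (2 * (\<gamma> - lam) / Lop_weight \<gamma> \<delta> n)"
      by (simp add: a_def)
    then have "norm (a n) = \<bar>2 * (\<gamma> - lam)\<bar> / Lop_weight \<gamma> \<delta> n"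
      using w \<gamma> by (simp only: norm_of_real abs_divide)
    also have "\<dots> \<le> \<bar>2 * (\<gamma> - lam)\<bar> / \<gamma>"
      using w \<gamma> by (intro divide_left_mono) auto
    finally show ?thesis by simp
  qed (use \<gamma> in \<open>auto simp: a_def\<close>)
  have sums: "(\<lambda>n. a n * z ^ n) sums extremal_fun \<gamma> \<delta> lam z" if "z \<in> ball 0 1" for z
  proof -
    have "summable (\<lambda>n. a n * z ^ n)"
    proof (rule summable_comparison_test')
      show "summable (\<lambda>n. (1 + \<bar>2 * (\<gamma> - lam)\<bar> / \<gamma>) * norm z ^ n)"
        using that by (intro summable_mult summable_geometric) simp
      show "norm (a n * z ^ n) \<le> (1 + \<bar>2 * (\<gamma> - lam)\<bar> / \<gamma>) * norm z ^ n" for n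
        unfolding norm_mult norm_power by (rule mult_right_mono[OF a_bound]) simp
    qed
    then have "(\<lambda>k. a (k + 2) * z ^ (k + 2)) sums (\<Sum>k. a (k + 2) * z ^ (k + 2))"
      by (intro summable_sums summable_ignore_initial_segment[of "\<lambda>n. a n * z ^ n"])
    then have "(\<lambda>n. a n * z ^ n) sums ((\<Sum>k. a (k + 2) * z ^ (k + 2)) + (\<Sum>n<2. a n * z ^ n))"
      by (rule sums_iff_shift[THEN iffD1])
    then show ?thesis
      by (simp add: a_def extremal_fun_def numeral_2_eq_2 add.commute)
  qed
  show "extremal_fun \<gamma> \<delta> lam holomorphic_on ball 0 1"
    using sums by (rule holomorphic_on_power_series[OF zero_less_one])
  show "tcoeff (extremal_fun \<gamma> \<delta> lam) n =
      (if n = 0 then 0 else if n = 1 then 1 else of_real (2 * (\<gamma> - lam) / Lop_weight \<gamma> \<delta> n))"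
    using tcoeff_power_series[OF zero_less_one sums] by (simp add: a_def)
qed

lemma Lop_extremal_fun:
  assumes \<gamma>: "0 < \<gamma>" and \<delta>: "\<gamma> \<le> \<delta>" and z: "z \<in> ball 0 1"
  shows "Lop \<gamma> \<delta> (extremal_fun \<gamma> \<delta> lam) z = of_real lam + of_real (\<gamma> - lam) * ((1 + z) / (1 - z))"
proof -
  let ?L = "Lop \<gamma> \<delta> (extremal_fun \<gamma> \<delta> lam)"
  have hol: "extremal_fun \<gamma> \<delta> lam holomorphic_on ball 0 1"
    by (rule holomorphic_on_extremal_fun[OF \<gamma> \<delta>])
  have coeff: "tcoeff ?L n = (if n = 0 then of_real \<gamma> else of_real (2 * (\<gamma> - lam)))" for n
  proof (cases n)
    case 0
    then show ?thesis
      by (simp add: tcoeff_Lop[OF hol] tcoeff_extremal_fun[OF \<gamma> \<delta>] Lop_weight_def)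
  next
    case (Suc k)
    have "0 < Lop_weight \<gamma> \<delta> (Suc n)"
      using Lop_weight_ge[OF \<gamma> \<delta>, of "Suc n"] \<gamma> by simp
    then show ?thesis
      using Suc by (simp add: tcoeff_Lop[OF hol] tcoeff_extremal_fun[OF \<gamma> \<delta>] flip: of_real_mult)
  qed
  have "(\<lambda>n. (if n = 0 then of_real \<gamma> else of_real (2 * (\<gamma> - lam))) * z ^ n) sums ?L z"
    unfolding coeff[symmetric] by (rule tcoeff_sums[OF holomorphic_on_Lop[OF hol open_ball] z])
  moreover have "(\<lambda>n. (if n = 0 then of_real \<gamma> else of_real (2 * (\<gamma> - lam))) * z ^ n) sums
      (of_real lam + of_real (\<gamma> - lam) * ((1 + z) / (1 - z)))"
  proof -
    have "norm z < 1" using z by simp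
    from sums_add[OF sums_mult[OF geometric_sums[OF this], of "of_real (2 * (\<gamma> - lam))"]
        sums_single[of 0 "\<lambda>_. of_real (2 * lam - \<gamma>)"]]
    have "(\<lambda>n. of_real (2 * (\<gamma> - lam)) * z ^ n + (if n = 0 then of_real (2 * lam - \<gamma>) else 0)) sums
        (of_real (2 * (\<gamma> - lam)) * (1 / (1 - z)) + of_real (2 * lam - \<gamma>))" .
    moreover have "(\<lambda>n. of_real (2 * (\<gamma> - lam)) * z ^ n + (if n = 0 then of_real (2 * lam - \<gamma>) else 0)) =
        (\<lambda>n. (if n = 0 then of_real \<gamma> else of_real (2 * (\<gamma> - lam))) * z ^ n)"
      by (simp add: fun_eq_iff algebra_simps)
    moreover have "z \<noteq> 1" using \<open>norm z < 1\<close> by auto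
    then have "of_real (2 * (\<gamma> - lam)) * (1 / (1 - z)) + of_real (2 * lam - \<gamma>) =
        of_real lam + of_real (\<gamma> - lam) * ((1 + z) / (1 - z))"
      by (simp add: field_simps)
    ultimately show ?thesis by metis
  qed
  ultimately show ?thesis
    by (rule sums_unique2)
qed

lemma RH0_extremal_fun:
  assumes \<gamma>: "0 < \<gamma>" and lam: "lam < \<gamma>" and \<delta>: "\<gamma> \<le> \<delta>"
  shows "RH0 \<gamma> \<delta> lam (extremal_fun \<gamma> \<delta> lam) (\<lambda>z. 0)"
  unfolding RH0_def H0_def
proof (intro conjI ballI)
  show "extremal_fun \<gamma> \<delta> lam holomorphic_on ball 0 1"
    by (rule holomorphic_on_extremal_fun[OF \<gamma> \<delta>])
  show "extremal_fun \<gamma> \<delta> lam 0 = 0"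
    by (simp add: extremal_fun_def)
  show "deriv (extremal_fun \<gamma> \<delta> lam) 0 = 1"
    using tcoeff_extremal_fun[OF \<gamma> \<delta>, of lam 1] by (simp add: tcoeff_def)
  fix z :: complex assume "z \<in> ball 0 1"
  then have "0 < (\<gamma> - lam) * Re ((1 + z) / (1 - z))"
    using Re_cayley_pos lam by simp
  also have "\<dots> = Re (Lop \<gamma> \<delta> (extremal_fun \<gamma> \<delta> lam) z - of_real lam)"
    unfolding Lop_extremal_fun[OF \<gamma> \<delta> \<open>z \<in> ball 0 1\<close>]
    by (simp only: minus_complex.sel plus_complex.sel times_complex.sel Re_complex_of_real Im_complex_of_real)
  finally show "norm (Lop \<gamma> \<delta> (\<lambda>z. 0) z) < Re (Lop \<gamma> \<delta> (extremal_fun \<gamma> \<delta> lam) z - of_real lam)"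
    by (simp add: Lop_def)
qed simp_all

theorem theorem7:
  fixes \<gamma> \<delta> lam :: real and s t :: "complex \<Rightarrow> complex"
  defines "B \<equiv> (\<lambda>m::nat. 4 * (\<gamma> - lam) / (real m ^ 2 * (2 * \<gamma> + (\<delta> - \<gamma>) * (real m - 1))))"
  assumes "0 \<le> lam" and "lam < \<gamma>" and "\<gamma> \<le> \<delta>"
  shows "(RH0 \<gamma> \<delta> lam s t \<longrightarrow>
           (\<forall>m\<ge>2. norm (tcoeff s m) + norm (tcoeff t m) \<le> B m
                  \<and> \<bar>norm (tcoeff s m) - norm (tcoeff t m)\<bar> \<le> B m
                  \<and> norm (tcoeff s m) \<le> B m))
       \<and> (let s0 = (\<lambda>z. z + (\<Sum>k. of_real (B (k + 2)) * z ^ (k + 2))); t0 = (\<lambda>z. 0)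
          in RH0 \<gamma> \<delta> lam s0 t0 \<and>
             (\<forall>m\<ge>2. norm (tcoeff s0 m) + norm (tcoeff t0 m) = B m
                  \<and> \<bar>norm (tcoeff s0 m) - norm (tcoeff t0 m)\<bar> = B m
                  \<and> norm (tcoeff s0 m) = B m))"
proof -
  have \<gamma>: "0 < \<gamma>" using assms by simp
  have B: "B m = 2 * (\<gamma> - lam) / Lop_weight \<gamma> \<delta> m" for m
    by (simp add: B_def Lop_weight_def)
  have weight_pos: "0 < Lop_weight \<gamma> \<delta> m" if "m \<ge> 2" for m
    using Lop_weight_ge[OF \<gamma> \<open>\<gamma> \<le> \<delta>\<close>, of m] \<gamma> that by simp
  have B_nonneg: "0 \<le> B m" if "m \<ge> 2" for m
    using weight_pos[OF that] \<open>lam < \<gamma>\<close> by (simp add: B)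
  have part_i_ii_iii: "RH0 \<gamma> \<delta> lam s t \<longrightarrow>
      (\<forall>m\<ge>2. norm (tcoeff s m) + norm (tcoeff t m) \<le> B m
             \<and> \<bar>norm (tcoeff s m) - norm (tcoeff t m)\<bar> \<le> B m
             \<and> norm (tcoeff s m) \<le> B m)"
  proof (intro impI allI)
    fix m :: nat assume "RH0 \<gamma> \<delta> lam s t" "m \<ge> 2"
    then have "norm (tcoeff s m) + norm (tcoeff t m) \<le> B m"
      using RH0_coeff_bound weight_pos by (simp add: B)
    then show "norm (tcoeff s m) + norm (tcoeff t m) \<le> B m
        \<and> \<bar>norm (tcoeff s m) - norm (tcoeff t m)\<bar> \<le> B m \<and> norm (tcoeff s m) \<le> B m"
      using norm_ge_zero[of "tcoeff s m"] norm_ge_zero[of "tcoeff t m"] unfolding abs_le_iff by linarith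
  qed
  have "(\<lambda>z. z + (\<Sum>k. of_real (B (k + 2)) * z ^ (k + 2))) = extremal_fun \<gamma> \<delta> lam"
    by (simp add: fun_eq_iff extremal_fun_def B)
  moreover have "tcoeff (extremal_fun \<gamma> \<delta> lam) m = of_real (B m)" if "m \<ge> 2" for m
    using tcoeff_extremal_fun[OF \<gamma> \<open>\<gamma> \<le> \<delta>\<close>, of lam m] that by (simp add: B)
  moreover have "tcoeff (\<lambda>z. 0) m = 0" for m
    by (simp add: tcoeff_def)
  ultimately show ?thesis
    using part_i_ii_iii RH0_extremal_fun[OF \<gamma> \<open>lam < \<gamma>\<close> \<open>\<gamma> \<le> \<delta>\<close>] B_nonneg by simp
qed

end
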